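(* Let $n\ge 1$ and let $\ell_1,\dots,\ell_n$ be positive integers or half-integers such that $N=\ell_1+\dots+\ell_n$ is an integer. Let $a\in\mathbb{C}$ and consider, on the open set of $(w,x_1,\dots,x_n,z_1,\dots,z_N)\in\mathbb{C}^{1+n+N}$ where all these $1+n+N$ points are pairwise distinct, any local holomorphic branch $f$ of the multivalued function $$f=\Big(\prod_{1\le i<j\le n}(x_j-x_i)^{2\ell_i\ell_j a}\Big)\Big(\prod_{i=1}^n\prod_{k=1}^N (z_k-x_i)^{-2\ell_i a}\Big)\Big(\prod_{1\le r<s\le N}(z_s-z_r)^{2a}\Big)\Big(\prod_{k=1}^N (z_k-w)^{2a-2}\Big)\Big(\prod_{i=1}^n (x_i-w)^{2\ell_i(1-a)}\Big).$$ For $r=1,\dots,N$ define the rational function $$g_r(w,x_1,\dots,x_n,z_1,\dots,z_N)=-\Big(\prod_{i=1}^n\Big(\frac{z_r-x_i}{w-x_i}\Big)^{2\ell_i}\Big)\Big(\prod_{s=1,\,s\ne r}^N\Big(\frac{w-z_s}{z_r-z_s}\Big)^2\Big).$$ Then $$\frac{\partial f}{\partial w}=\sum_{r=1}^N\frac{\partial}{\partial z_r}\big(g_r f\big).$$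
   Context: Here $a$ plays the role of $\alpha_-^2$ (a Coulomb-gas parameter). Since $2\ell_i$ are integers, each $g_r$ is single-valued. The choice of branch of $f$ only changes $f$ by a constant multiplicative factor, which does not affect the identity. *)

theory Defs
  imports "HOL-Analysis.Analysis"
begin

text \<open>A point of C^(1+n+N) is represented as a triple (w, x, z) with
  x i (i = 1..n) and z k (k = 1..N); other indices are irrelevant.\<close>

type_synonym cpoint = "complex \<times> (nat \<Rightarrow> complex) \<times> (nat \<Rightarrow> complex)"

definition config :: "nat \<Rightarrow> nat \<Rightarrow> cpoint set" where
  "config n N = {(w, x, z).
     (\<forall>i\<in>{1..n}. x i \<noteq> w) \<and> (\<forall>k\<in>{1..N}. z k \<noteq> w) \<and>
     inj_on x {1..n} \<and> inj_on z {1..N} \<and>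
     (\<forall>i\<in>{1..n}. \<forall>k\<in>{1..N}. x i \<noteq> z k)}"

text \<open>f is a holomorphic branch on U of the multivalued function
  prod (x_j-x_i)^(2 l_i l_j a) prod (z_k-x_i)^(-2 l_i a) prod (z_s-z_r)^(2a)
  prod (z_k-w)^(2a-2) prod (x_i-w)^(2 l_i (1-a)):
  each factor c^e is realised as exp (e * L) with L a continuous logarithm of c on U.\<close>
definition is_branch ::
  "nat \<Rightarrow> nat \<Rightarrow> (nat \<Rightarrow> real) \<Rightarrow> complex \<Rightarrow> cpoint set \<Rightarrow> (cpoint \<Rightarrow> complex) \<Rightarrow> bool" where
  "is_branch n N l a U f \<longleftrightarrow>
    (\<exists>(Lxx :: nat \<Rightarrow> nat \<Rightarrow> cpoint \<Rightarrow> complex) (Lzx :: nat \<Rightarrow> nat \<Rightarrow> cpoint \<Rightarrow> complex)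
        (Lzz :: nat \<Rightarrow> nat \<Rightarrow> cpoint \<Rightarrow> complex) (Lzw :: nat \<Rightarrow> nat \<Rightarrow> cpoint \<Rightarrow> complex)
        (Lxw :: nat \<Rightarrow> nat \<Rightarrow> cpoint \<Rightarrow> complex).
       (\<forall>i\<in>{1..n}. \<forall>j\<in>{1..n}. i < j \<longrightarrow> continuous_on U (Lxx i j)) \<and>
       (\<forall>i\<in>{1..n}. \<forall>k\<in>{1..N}. continuous_on U (Lzx i k)) \<and>
       (\<forall>r\<in>{1..N}. \<forall>s\<in>{1..N}. r < s \<longrightarrow> continuous_on U (Lzz r s)) \<and>
       (\<forall>k\<in>{1..N}. continuous_on U (Lzw k 0)) \<and>
       (\<forall>i\<in>{1..n}. continuous_on U (Lxw i 0)) \<and>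
       (\<forall>(w, x, z)\<in>U.
          (\<forall>i\<in>{1..n}. \<forall>j\<in>{1..n}. i < j \<longrightarrow> exp (Lxx i j (w, x, z)) = x j - x i) \<and>
          (\<forall>i\<in>{1..n}. \<forall>k\<in>{1..N}. exp (Lzx i k (w, x, z)) = z k - x i) \<and>
          (\<forall>r\<in>{1..N}. \<forall>s\<in>{1..N}. r < s \<longrightarrow> exp (Lzz r s (w, x, z)) = z s - z r) \<and>
          (\<forall>k\<in>{1..N}. exp (Lzw k 0 (w, x, z)) = z k - w) \<and>
          (\<forall>i\<in>{1..n}. exp (Lxw i 0 (w, x, z)) = x i - w) \<and>
          f (w, x, z) = exp (
              (\<Sum>j\<in>{1..n}. \<Sum>i\<in>{1..<j}. 2 * of_real (l i) * of_real (l j) * a * Lxx i j (w, x, z))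
            + (\<Sum>i\<in>{1..n}. \<Sum>k\<in>{1..N}. - 2 * of_real (l i) * a * Lzx i k (w, x, z))
            + (\<Sum>s\<in>{1..N}. \<Sum>r\<in>{1..<s}. 2 * a * Lzz r s (w, x, z))
            + (\<Sum>k\<in>{1..N}. (2 * a - 2) * Lzw k 0 (w, x, z))
            + (\<Sum>i\<in>{1..n}. 2 * of_real (l i) * (1 - a) * Lxw i 0 (w, x, z)))))"

text \<open>The rational functions g_r; 2 l_i is a positive integer.\<close>
definition g_fun :: "nat \<Rightarrow> nat \<Rightarrow> (nat \<Rightarrow> real) \<Rightarrow> nat \<Rightarrow> cpoint \<Rightarrow> complex" where
  "g_fun n N l r p = (case p of (w, x, z) \<Rightarrow>
     - ((\<Prod>i\<in>{1..n}. ((z r - x i) / (w - x i)) ^ nat \<lfloor>2 * l i\<rfloor>) *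
        (\<Prod>s\<in>{1..N} - {r}. ((w - z s) / (z r - z s)) ^ 2)))"

end

theory Submission
  imports Defs "HOL-Computational_Algebra.Polynomial"
begin

(*
  Logarithmic differentiation turns the identity into one between rational functions. Put
  P(u) = prod_i (u - x_i)^(2 l_i), Q(u) = prod_k (u - z_k) and q_r(u) = Q(u) / (u - z_r). Then
  d_w f = (1 - a) (P'/P - 2 Q'/Q)(w) f, and d_(z_r) (g_r f) = (1 - a) g_r B_r f with
  B_r = (P'/P - 2 q_r'/q_r)(z_r) - 2 / (z_r - w).
  As P and Q^2 are monic of the same degree 2N, Hermite interpolation at the double nodes z_r gives
  P / Q^2 = 1 + sum_r (c_r / (u - z_r)^2 + c_r (B_r + 2 / (z_r - w)) / (u - z_r)),
  c_r = P(z_r) / q_r(z_r)^2, and g_r(w) = - Q(w)^2 / P(w) * c_r / (w - z_r)^2. Differentiating this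
  expansion at w and comparing with (P / Q^2)' = (P / Q^2) (P'/P - 2 Q'/Q) yields
  sum_r g_r(w) B_r = (P'/P - 2 Q'/Q)(w), which is the claim.
*)

lemma linear_square_dvd_of_double_root:
  fixes p :: "'a::idom poly"
  assumes "poly p a = 0" "poly (pderiv p) a = 0"
  shows "[:-a, 1:]^2 dvd p"
proof -
  obtain q where q: "p = [:-a, 1:] * q" using assms(1) poly_eq_0_iff_dvd by blast
  have "pderiv p = [:-a, 1:] * pderiv q + q * pderiv [:-a, 1:]"
    unfolding q by (rule pderiv_mult)
  then have "pderiv p = [:-a, 1:] * pderiv q + q" by (simp add: pderiv_pCons)
  then have "poly q a = 0" using assms(2) by simp
  then obtain q' where "q = [:-a, 1:] * q'" using poly_eq_0_iff_dvd by blast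
  then have "p = [:-a, 1:]^2 * q'" using q by (simp only: power2_eq_square mult.assoc)
  then show ?thesis by simp
qed

lemma prod_linear_squares_dvd_of_double_roots:
  fixes T :: "'a::idom poly" and z :: "'k \<Rightarrow> 'a"
  assumes "finite K" "inj_on z K"
    and "\<And>k. k \<in> K \<Longrightarrow> poly T (z k) = 0 \<and> poly (pderiv T) (z k) = 0"
  shows "(\<Prod>k\<in>K. [:-z k, 1:]^2) dvd T"
  using assms
proof (induction K rule: finite_induct)
  case empty
  then show ?case by simp
next
  case (insert s K)
  define A where "A = (\<Prod>k\<in>K. [:-z k, 1:]^2)"
  have "A dvd T"
    using insert by (auto simp: A_def inj_on_insert)
  then obtain T1 where T1: "T = A * T1" ..
  have A_ne: "poly A (z s) \<noteq> 0"
    using insert.prems(1) insert.hyps by (auto simp: A_def poly_prod inj_on_def)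
  have "pderiv T = A * pderiv T1 + T1 * pderiv A"
    unfolding T1 by (rule pderiv_mult)
  then have "poly T1 (z s) = 0" "poly (pderiv T1) (z s) = 0"
    using insert.prems(2)[of s] A_ne T1 by auto
  then have "[:-z s, 1:]^2 dvd T1" by (rule linear_square_dvd_of_double_root)
  then show ?case
    using insert.hyps unfolding T1 A_def by (simp add: mult_dvd_mono)
qed

lemma poly_eq_0_of_double_roots:
  fixes T :: "'a::idom poly" and z :: "'k \<Rightarrow> 'a"
  assumes "finite K" "inj_on z K"
    and "\<And>k. k \<in> K \<Longrightarrow> poly T (z k) = 0 \<and> poly (pderiv T) (z k) = 0"
    and "\<And>j. j \<ge> 2 * card K \<Longrightarrow> coeff T j = 0"
  shows "T = 0"
proof (rule ccontr)
  assume "T \<noteq> 0"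
  have "(\<Prod>k\<in>K. [:-z k, 1:]^2) dvd T"
    using assms(1-3) by (rule prod_linear_squares_dvd_of_double_roots)
  then have "degree (\<Prod>k\<in>K. [:-z k, 1:]^2) \<le> degree T"
    using \<open>T \<noteq> 0\<close> by (rule dvd_imp_degree_le)
  moreover have "degree (\<Prod>k\<in>K. [:-z k, 1:]^2) = 2 * card K"
    using assms(1) by (subst degree_prod_eq_sum_degree) (auto simp: degree_linear_power)
  ultimately have "lead_coeff T = 0" using assms(4) by simp
  then show False using \<open>T \<noteq> 0\<close> by simp
qed

lemma hermite_expansion_double_nodes:
  fixes p :: "'a::field poly" and z :: "'k \<Rightarrow> 'a"
  assumes K: "finite K" "inj_on z K" and deg: "degree p \<le> 2 * card K"
  defines "q \<equiv> \<lambda>s. \<Prod>k\<in>K - {s}. [:-z k, 1:]"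
  defines "c \<equiv> \<lambda>s. poly p (z s) / poly (q s) (z s)^2"
  defines "d \<equiv> \<lambda>s. (poly (pderiv p) (z s) - 2 * c s * poly (q s) (z s) * poly (pderiv (q s)) (z s))
                    / poly (q s) (z s)^2"
  shows "p = smult (coeff p (2 * card K)) ((\<Prod>k\<in>K. [:-z k, 1:])^2)
             + (\<Sum>s\<in>K. q s^2 * [:c s - d s * z s, d s:])"
proof -
  define Q where "Q = (\<Prod>k\<in>K. [:-z k, 1:])"
  define h where "h s = q s^2 * [:c s - d s * z s, d s:]" for s
  define T where "T = p - smult (coeff p (2 * card K)) (Q^2) - (\<Sum>s\<in>K. h s)"
  have Q_root: "poly Q (z r) = 0" if "r \<in> K" for r
    using that K by (auto simp: Q_def poly_prod)
  have q_root: "poly (q s) (z r) = 0" if "r \<in> K" "s \<noteq> r" for r s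
    using that K by (auto simp: q_def poly_prod)
  have q_ne: "poly (q r) (z r) \<noteq> 0" if "r \<in> K" for r
    using that K by (auto simp: q_def poly_prod inj_on_def)
  have poly_h: "poly (h s) u = poly (q s) u^2 * (c s + d s * (u - z s))" for s u
    by (simp add: h_def algebra_simps)
  have poly_dh: "poly (pderiv (h s)) u
      = poly (q s) u^2 * d s + 2 * poly (q s) u * poly (pderiv (q s)) u * (c s + d s * (u - z s))" for s u
    unfolding h_def power2_eq_square pderiv_mult by (simp add: pderiv_pCons algebra_simps)
  have h_root: "poly (h s) (z r) = 0 \<and> poly (pderiv (h s)) (z r) = 0" if "r \<in> K" "s \<noteq> r" for r s
    using q_root[OF that] by (simp add: poly_h poly_dh)
  have "poly T (z r) = 0 \<and> poly (pderiv T) (z r) = 0" if r: "r \<in> K" for r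
  proof -
    have sum_h: "(\<Sum>s\<in>K. F (h s)) = F (h r)" if "\<And>s. s \<in> K \<Longrightarrow> s \<noteq> r \<Longrightarrow> F (h s) = 0"
      for F :: "'a poly \<Rightarrow> 'a"
      using sum.mono_neutral_left[of K "{r}" "\<lambda>s. F (h s)"] that r K(1) by auto
    have "(\<Sum>s\<in>K. poly (h s) (z r)) = poly (h r) (z r)"
      using sum_h[of "\<lambda>g. poly g (z r)"] h_root r by blast
    also have "\<dots> = poly p (z r)"
      using q_ne[OF r] by (simp add: poly_h c_def)
    moreover have "(\<Sum>s\<in>K. poly (pderiv (h s)) (z r)) = poly (pderiv (h r)) (z r)"
      using sum_h[of "\<lambda>g. poly (pderiv g) (z r)"] h_root r by blast
    moreover have "\<dots> = poly (pderiv p) (z r)"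
      using q_ne[OF r] by (simp add: poly_dh d_def field_simps)
    ultimately show ?thesis
      using Q_root[OF r]
      by (simp add: T_def poly_sum higher_pderiv_sum[of 1, simplified] pderiv_diff pderiv_smult
          pderiv_power_Suc numeral_2_eq_2 pderiv_mult)
  qed
  moreover have "coeff T j = 0" if j: "j \<ge> 2 * card K" for j
  proof -
    have Q_lc: "lead_coeff Q = 1"
      by (simp add: Q_def lead_coeff_prod)
    then have "degree (Q^2) = 2 * card K"
      using K(1) by (auto simp: Q_def degree_power_eq degree_prod_eq_sum_degree)
    moreover have "lead_coeff (Q^2) = 1"
      using Q_lc by (simp add: lead_coeff_power)
    ultimately have "coeff (Q^2) j = (if j = 2 * card K then 1 else 0)"
      using j by (auto intro: coeff_eq_0)
    moreover have "coeff p j = (if j = 2 * card K then coeff p (2 * card K) else 0)"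
      using deg j by (auto intro: coeff_eq_0)
    moreover have "coeff (h s) j = 0" if s: "s \<in> K" for s
    proof -
      have "degree (q s) = card K - 1"
        using K(1) s by (simp add: q_def degree_prod_eq_sum_degree)
      then have "degree (h s) \<le> 2 * (card K - 1) + 1"
        unfolding h_def
        by (intro order.trans[OF degree_mult_le] add_mono order.trans[OF degree_power_le]) auto
      moreover have "card K \<ge> 1" using K(1) s by (auto simp: Suc_le_eq card_gt_0_iff)
      ultimately show ?thesis using j by (intro coeff_eq_0) linarith
    qed
    ultimately show ?thesis by (simp add: T_def coeff_sum)
  qed
  ultimately have "T = 0" using K by (intro poly_eq_0_of_double_roots[of K z]) auto
  then show ?thesis unfolding T_def Q_def h_def by (simp only: diff_diff_eq right_minus_eq)
qed

lemma DERIV_prod_linear_powers: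
  fixes x :: "'i \<Rightarrow> 'a::real_normed_field"
  assumes "\<And>i. i \<in> I \<Longrightarrow> u \<noteq> x i"
  shows "((\<lambda>t. \<Prod>i\<in>I. (t - x i) ^ m i) has_field_derivative
           (\<Prod>i\<in>I. (u - x i) ^ m i) * (\<Sum>i\<in>I. of_nat (m i) / (u - x i))) (at u)"
proof -
  have "((\<lambda>t. \<Prod>i\<in>I. (t - x i) ^ m i) has_field_derivative
      (\<Prod>i\<in>I. (u - x i) ^ m i) * (\<Sum>i\<in>I. of_nat (m i) * (u - x i) ^ (m i - 1) / (u - x i) ^ m i)) (at u)"
    using assms by (intro has_field_derivative_prod') (auto intro!: derivative_eq_intros)
  moreover have "of_nat (m i) * (u - x i) ^ (m i - 1) / (u - x i) ^ m i = of_nat (m i) / (u - x i)"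
    if "i \<in> I" for i
    using assms[OF that] by (cases "m i") (simp_all add: field_simps)
  ultimately show ?thesis by (simp cong: sum.cong)
qed

lemma poly_pderiv_prod_linear_powers:
  fixes x :: "'i \<Rightarrow> 'a::real_normed_field"
  assumes "\<And>i. i \<in> I \<Longrightarrow> u \<noteq> x i"
  shows "poly (pderiv (\<Prod>i\<in>I. [:-x i, 1:] ^ m i)) u
           = (\<Prod>i\<in>I. (u - x i) ^ m i) * (\<Sum>i\<in>I. of_nat (m i) / (u - x i))"
proof -
  have "((\<lambda>t. \<Prod>i\<in>I. (t - x i) ^ m i) has_field_derivative
           poly (pderiv (\<Prod>i\<in>I. [:-x i, 1:] ^ m i)) u) (at u)"
    using poly_DERIV[of "\<Prod>i\<in>I. [:-x i, 1:] ^ m i" u] by (simp add: poly_prod)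
  then show ?thesis
    using DERIV_prod_linear_powers[OF assms] by (rule DERIV_unique)
qed

lemma has_field_derivative_continuous_log:
  fixes L h :: "complex \<Rightarrow> complex"
  assumes S: "open S" "t0 \<in> S" and L: "continuous_on S L" "\<And>t. t \<in> S \<Longrightarrow> exp (L t) = h t"
    and h: "(h has_field_derivative h') (at t0)"
  shows "(L has_field_derivative h' / h t0) (at t0)"
proof -
  have h0: "h t0 \<noteq> 0"
    using L(2)[OF S(2)] by (metis exp_not_eq_zero)
  \<comment> \<open>On \<open>V\<close>, \<open>L t - L t0\<close> is the principal logarithm of \<open>h t / h t0\<close>.\<close>
  define V where "V = L -` ball (L t0) pi \<inter> S"
  have "((\<lambda>t. L t0 + Ln (h t / h t0)) has_field_derivative h' / h t0) (at t0)"
  proof -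
    have "((\<lambda>t. h t / h t0) has_field_derivative h' / h t0) (at t0)"
      using h by (rule DERIV_cdivide)
    moreover have "(Ln has_field_derivative 1) (at (h t0 / h t0))"
      using h0 has_field_derivative_Ln[of 1] by simp
    ultimately have "((\<lambda>t. Ln (h t / h t0)) has_field_derivative 1 * (h' / h t0)) (at t0)"
      by (rule DERIV_chain2[rotated])
    from DERIV_add[OF DERIV_const this] show ?thesis by simp
  qed
  moreover have "open V"
    unfolding V_def using continuous_on_open_vimage[OF S(1)] L(1) open_ball by blast
  moreover have "t0 \<in> V" using S(2) by (simp add: V_def)
  moreover have "L t0 + Ln (h t / h t0) = L t" if "t \<in> V" for t
  proof -
    have "\<bar>Im (L t - L t0)\<bar> < pi"
      using that abs_Im_le_cmod[of "L t - L t0"] by (simp add: V_def dist_norm norm_minus_commute)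
    then have "Ln (exp (L t - L t0)) = L t - L t0" by (intro Ln_exp) auto
    moreover have "exp (L t - L t0) = h t / h t0"
      using that S(2) L(2) by (simp add: V_def exp_diff)
    ultimately show ?thesis by simp
  qed
  ultimately show ?thesis by (rule has_field_derivative_transform_within_open)
qed

lemma prod_linear_powers_partial_fractions:
  fixes x :: "'i \<Rightarrow> complex" and z :: "'k \<Rightarrow> complex"
  assumes I: "finite I" and K: "finite K" "inj_on z K" and m: "(\<Sum>i\<in>I. m i) = 2 * card K"
    and xz: "\<And>i k. i \<in> I \<Longrightarrow> k \<in> K \<Longrightarrow> x i \<noteq> z k" and u: "u \<notin> z ` K"
  defines "c \<equiv> \<lambda>s. (\<Prod>i\<in>I. (z s - x i) ^ m i) / (\<Prod>k\<in>K - {s}. z s - z k)^2"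
  shows "(\<Prod>i\<in>I. (u - x i) ^ m i) / (\<Prod>k\<in>K. u - z k)^2
           = 1 + (\<Sum>s\<in>K. c s / (u - z s)^2
                   + c s * ((\<Sum>i\<in>I. of_nat (m i) / (z s - x i)) - (\<Sum>k\<in>K - {s}. 2 / (z s - z k))) / (u - z s))"
proof -
  define p where "p = (\<Prod>i\<in>I. [:-x i, 1:] ^ m i)"
  define q where "q s = (\<Prod>k\<in>K - {s}. [:-z k, 1:])" for s
  define d where "d s = (poly (pderiv p) (z s) - 2 * c s * poly (q s) (z s) * poly (pderiv (q s)) (z s))
                        / poly (q s) (z s)^2" for s
  have poly_q: "poly (q s) t = (\<Prod>k\<in>K - {s}. t - z k)" for s t
    by (simp add: q_def poly_prod)
  have "degree p = 2 * card K"
    using m by (simp add: p_def degree_prod_eq_sum_degree degree_linear_power)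
  moreover have "lead_coeff p = 1"
    by (simp add: p_def lead_coeff_prod lead_coeff_power)
  ultimately have p: "p = (\<Prod>k\<in>K. [:-z k, 1:])^2 + (\<Sum>s\<in>K. q s^2 * [:c s - d s * z s, d s:])"
    using hermite_expansion_double_nodes[OF K, of p]
    by (simp add: q_def d_def c_def p_def poly_prod)
  have d: "d s = c s * ((\<Sum>i\<in>I. of_nat (m i) / (z s - x i)) - (\<Sum>k\<in>K - {s}. 2 / (z s - z k)))"
    if s: "s \<in> K" for s
  proof -
    have "z s \<noteq> z k" if "k \<in> K - {s}" for k
      using that s K(2) by (auto dest: inj_onD)
    then have "poly (q s) (z s) \<noteq> 0"
      and "poly (pderiv (q s)) (z s) = poly (q s) (z s) * (\<Sum>k\<in>K - {s}. 1 / (z s - z k))"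
      using K(1) poly_pderiv_prod_linear_powers[of "K - {s}" "z s" z "\<lambda>_. 1"]
      by (simp_all add: q_def poly_prod)
    moreover have "poly (pderiv p) (z s) = (\<Prod>i\<in>I. (z s - x i) ^ m i) * (\<Sum>i\<in>I. of_nat (m i) / (z s - x i))"
      using xz s unfolding p_def by (intro poly_pderiv_prod_linear_powers) (metis)
    ultimately show ?thesis
      by (simp add: d_def c_def poly_q sum_distrib_left field_simps power2_eq_square)
  qed
  have Q_ne: "(\<Prod>k\<in>K. u - z k) \<noteq> 0"
    using K(1) u by auto
  have "(\<Prod>i\<in>I. (u - x i) ^ m i) = poly p u"
    by (simp add: p_def poly_prod)
  also have "\<dots> = (\<Prod>k\<in>K. u - z k)^2 + (\<Sum>s\<in>K. poly (q s) u^2 * (c s + d s * (u - z s)))"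
    by (subst p) (simp add: poly_sum poly_prod algebra_simps)
  finally have "(\<Prod>i\<in>I. (u - x i) ^ m i) / (\<Prod>k\<in>K. u - z k)^2
      = 1 + (\<Sum>s\<in>K. poly (q s) u^2 * (c s + d s * (u - z s)) / (\<Prod>k\<in>K. u - z k)^2)"
    using Q_ne by (simp add: add_divide_distrib sum_divide_distrib)
  also have "\<dots> = 1 + (\<Sum>s\<in>K. c s / (u - z s)^2 + d s / (u - z s))"
  proof (intro arg_cong[where f = "(+) 1"] sum.cong refl)
    fix s assume s: "s \<in> K"
    then have Q_split: "(\<Prod>k\<in>K. u - z k) = (u - z s) * poly (q s) u"
      using K(1) by (simp add: poly_q prod.remove)
    then have "u - z s \<noteq> 0" "poly (q s) u \<noteq> 0"
      using Q_ne by auto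
    then show "poly (q s) u^2 * (c s + d s * (u - z s)) / (\<Prod>k\<in>K. u - z k)^2
        = c s / (u - z s)^2 + d s / (u - z s)"
      unfolding Q_split power_mult_distrib
      by (simp add: add_divide_distrib power2_eq_square)
  qed
  finally show ?thesis
    by (simp add: d times_divide_eq_left cong: sum.cong)
qed

lemma DERIV_double_pole:
  fixes a c d w :: "'a::real_normed_field"
  assumes "w \<noteq> a"
  shows "((\<lambda>u. c / (u - a)^2 + d / (u - a)) has_field_derivative - 2 * c / (w - a)^3 - d / (w - a)^2) (at w)"
proof (rule DERIV_cong)
  show "((\<lambda>u. c / (u - a)^2 + d / (u - a)) has_field_derivative
      - (c * (of_nat 2 * (w - a) ^ (2 - 1) * 1)) / ((w - a)^2 * (w - a)^2) - d * 1 / ((w - a) * (w - a))) (at w)"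
    using assms by (auto intro!: derivative_eq_intros)
  have "- (c * (of_nat 2 * e ^ (2 - 1) * 1)) / (e^2 * e^2) - d * 1 / (e * e) = - 2 * c / e^3 - d / e^2"
    if "e \<noteq> 0" for e :: 'a
    using that by (simp add: field_simps power2_eq_square power3_eq_cube)
  from this[of "w - a"] assms
  show "- (c * (of_nat 2 * (w - a) ^ (2 - 1) * 1)) / ((w - a)^2 * (w - a)^2) - d * 1 / ((w - a) * (w - a))
      = - 2 * c / (w - a)^3 - d / (w - a)^2" by simp
qed

lemma prod_linear_powers_log_deriv_expansion:
  fixes x :: "'i \<Rightarrow> complex" and z :: "'k \<Rightarrow> complex"
  assumes I: "finite I" and K: "finite K" "inj_on z K" and m: "(\<Sum>i\<in>I. m i) = 2 * card K"
    and xz: "\<And>i k. i \<in> I \<Longrightarrow> k \<in> K \<Longrightarrow> x i \<noteq> z k"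
    and xw: "\<And>i. i \<in> I \<Longrightarrow> x i \<noteq> w" and zw: "\<And>k. k \<in> K \<Longrightarrow> z k \<noteq> w"
  defines "c \<equiv> \<lambda>s. (\<Prod>i\<in>I. (z s - x i) ^ m i) / (\<Prod>k\<in>K - {s}. z s - z k)^2"
    and "B \<equiv> \<lambda>s. (\<Sum>i\<in>I. of_nat (m i) / (z s - x i)) - (\<Sum>k\<in>K - {s}. 2 / (z s - z k))"
  shows "(\<Prod>i\<in>I. (w - x i) ^ m i) / (\<Prod>k\<in>K. (w - z k)^2)
           * ((\<Sum>i\<in>I. of_nat (m i) / (w - x i)) - (\<Sum>k\<in>K. 2 / (w - z k)))
         = (\<Sum>s\<in>K. - 2 * c s / (w - z s)^3 - c s * B s / (w - z s)^2)"
proof -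
  define P where "P u = (\<Prod>i\<in>I. (u - x i) ^ m i)" for u
  define Q2 where "Q2 u = (\<Prod>k\<in>K. (u - z k)^2)" for u
  define R where "R u = 1 + (\<Sum>s\<in>K. c s / (u - z s)^2 + c s * B s / (u - z s))" for u
  have Q2_w: "Q2 w \<noteq> 0"
    using K zw by (auto simp: Q2_def)
  have R_eq: "R u = P u / Q2 u" if "u \<in> - z ` K" for u
    using prod_linear_powers_partial_fractions[OF I K m xz, where u = u] that
    by (simp add: P_def Q2_def R_def c_def B_def prod_power_distrib)
  have "(R has_field_derivative 0 + (\<Sum>s\<in>K. - 2 * c s / (w - z s)^3 - c s * B s / (w - z s)^2)) (at w)"
    unfolding R_def using zw by (intro DERIV_add DERIV_const DERIV_sum DERIV_double_pole) auto
  then have "(R has_field_derivative (\<Sum>s\<in>K. - 2 * c s / (w - z s)^3 - c s * B s / (w - z s)^2)) (at w)"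
    by simp
  moreover have "open (- z ` K)"
    using K(1) by (simp add: finite_imp_closed open_Compl)
  moreover have "w \<in> - z ` K"
    using zw by auto
  ultimately have "((\<lambda>u. P u / Q2 u) has_field_derivative
      (\<Sum>s\<in>K. - 2 * c s / (w - z s)^3 - c s * B s / (w - z s)^2)) (at w)"
    using R_eq by (rule has_field_derivative_transform_within_open)
  moreover have "((\<lambda>u. P u / Q2 u) has_field_derivative
      P w / Q2 w * ((\<Sum>i\<in>I. of_nat (m i) / (w - x i)) - (\<Sum>k\<in>K. 2 / (w - z k)))) (at w)"
  proof -
    have "(P has_field_derivative P w * (\<Sum>i\<in>I. of_nat (m i) / (w - x i))) (at w)"
      unfolding P_def using xw by (intro DERIV_prod_linear_powers) metis
    moreover have "(Q2 has_field_derivative Q2 w * (\<Sum>k\<in>K. of_nat 2 / (w - z k))) (at w)"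
      unfolding Q2_def using zw by (intro DERIV_prod_linear_powers) metis
    ultimately have "((\<lambda>u. P u / Q2 u) has_field_derivative
        (P w * (\<Sum>i\<in>I. of_nat (m i) / (w - x i)) * Q2 w - P w * (Q2 w * (\<Sum>k\<in>K. of_nat 2 / (w - z k))))
          / (Q2 w * Q2 w)) (at w)"
      using Q2_w by (rule DERIV_divide)
    then show ?thesis
      by (rule DERIV_cong) (use Q2_w in \<open>simp add: field_simps\<close>)
  qed
  ultimately show ?thesis
    unfolding P_def Q2_def using DERIV_unique by blast
qed

lemma log_deriv_partial_fraction_identity:
  fixes x :: "'i \<Rightarrow> complex" and z :: "'k \<Rightarrow> complex"
  assumes I: "finite I" and K: "finite K" "inj_on z K" and m: "(\<Sum>i\<in>I. m i) = 2 * card K"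
    and xz: "\<And>i k. i \<in> I \<Longrightarrow> k \<in> K \<Longrightarrow> x i \<noteq> z k"
    and xw: "\<And>i. i \<in> I \<Longrightarrow> x i \<noteq> w" and zw: "\<And>k. k \<in> K \<Longrightarrow> z k \<noteq> w"
  shows "(\<Sum>r\<in>K. - ((\<Prod>i\<in>I. ((z r - x i) / (w - x i)) ^ m i) * (\<Prod>s\<in>K - {r}. ((w - z s) / (z r - z s))^2))
            * ((\<Sum>i\<in>I. of_nat (m i) / (z r - x i)) - (\<Sum>s\<in>K - {r}. 2 / (z r - z s)) - 2 / (z r - w)))
       = (\<Sum>i\<in>I. of_nat (m i) / (w - x i)) - (\<Sum>k\<in>K. 2 / (w - z k))"
proof -
  define P where "P u = (\<Prod>i\<in>I. (u - x i) ^ m i)" for u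
  define Q2 where "Q2 u = (\<Prod>k\<in>K. (u - z k)^2)" for u
  define q where "q r u = (\<Prod>s\<in>K - {r}. u - z s)" for r u
  define c where "c r = P (z r) / q r (z r)^2" for r
  define B where "B r = (\<Sum>i\<in>I. of_nat (m i) / (z r - x i)) - (\<Sum>s\<in>K - {r}. 2 / (z r - z s))" for r
  have P_w: "P w \<noteq> 0" and Q2_w: "Q2 w \<noteq> 0"
    using I K xw zw by (auto simp: P_def Q2_def)
  have log_deriv: "P w / Q2 w * ((\<Sum>i\<in>I. of_nat (m i) / (w - x i)) - (\<Sum>k\<in>K. 2 / (w - z k)))
      = (\<Sum>s\<in>K. - 2 * c s / (w - z s)^3 - c s * B s / (w - z s)^2)"
    using prod_linear_powers_log_deriv_expansion[OF I K m xz xw zw]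
    by (simp add: P_def Q2_def c_def q_def B_def)
  have summand: "- ((\<Prod>i\<in>I. ((z r - x i) / (w - x i)) ^ m i) * (\<Prod>s\<in>K - {r}. ((w - z s) / (z r - z s))^2))
        * (B r - 2 / (z r - w))
      = Q2 w / P w * (- 2 * c r / (w - z r)^3 - c r * B r / (w - z r)^2)" if r: "r \<in> K" for r
  proof -
    have key: "- (Pz / Pw * (qw^2 / qz^2)) * (b - 2 / - e)
        = e^2 * qw^2 / Pw * (- 2 * (Pz / qz^2) / e^3 - Pz / qz^2 * b / e^2)"
      if "Pw \<noteq> 0" "qz \<noteq> 0" "e \<noteq> 0" for Pz Pw qw qz e b :: complex
      using that by (simp add: field_simps power2_eq_square power3_eq_cube)
    have P_ratio: "(\<Prod>i\<in>I. ((z r - x i) / (w - x i)) ^ m i) = P (z r) / P w"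
      by (simp add: P_def power_divide prod_dividef)
    have q_ratio: "(\<Prod>s\<in>K - {r}. ((w - z s) / (z r - z s))^2) = q r w^2 / q r (z r)^2"
      by (simp add: q_def power_divide prod_dividef prod_power_distrib)
    have Q2_split: "Q2 w = (w - z r)^2 * q r w^2"
      using K(1) r by (simp add: Q2_def q_def prod.remove power_mult_distrib prod_power_distrib)
    have "q r (z r) \<noteq> 0"
      using K r by (auto simp: q_def dest: inj_onD)
    moreover have "w - z r \<noteq> 0"
      using zw r by auto
    ultimately show ?thesis
      unfolding c_def P_ratio q_ratio Q2_split minus_diff_eq[of w "z r", symmetric] by (rule key[OF P_w])
  qed
  have "(\<Sum>r\<in>K. - ((\<Prod>i\<in>I. ((z r - x i) / (w - x i)) ^ m i) * (\<Prod>s\<in>K - {r}. ((w - z s) / (z r - z s))^2))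
            * (B r - 2 / (z r - w)))
      = Q2 w / P w * (\<Sum>s\<in>K. - 2 * c s / (w - z s)^3 - c s * B s / (w - z s)^2)"
    unfolding sum_distrib_left by (rule sum.cong[OF refl summand])
  also have "\<dots> = (\<Sum>i\<in>I. of_nat (m i) / (w - x i)) - (\<Sum>k\<in>K. 2 / (w - z k))"
    unfolding log_deriv[symmetric] using P_w Q2_w by simp
  finally show ?thesis by (simp add: B_def)
qed

definition wz_line :: "complex \<Rightarrow> (nat \<Rightarrow> complex) \<Rightarrow> cpoint \<Rightarrow> complex \<Rightarrow> cpoint" where
  "wz_line dw dz p t = (fst p + t * dw, fst (snd p), \<lambda>k. snd (snd p) k + t * dz k)"

lemma wz_line_0 [simp]: "wz_line dw dz p 0 = p"
  by (simp add: wz_line_def)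

lemma continuous_on_wz_line: "continuous_on UNIV (wz_line dw dz p)"
proof -
  have "continuous_on UNIV (\<lambda>t. \<lambda>k. snd (snd p) k + t * dz k)"
    by (intro continuous_on_coordinatewise_then_product continuous_intros)
  then show ?thesis
    unfolding wz_line_def by (intro continuous_on_Pair continuous_on_const continuous_intros)
qed

lemma continuous_log_DERIV_along_wz_line:
  fixes L :: "cpoint \<Rightarrow> complex"
  assumes U: "open U" "p \<in> U" and L: "continuous_on U L"
    and exp_L: "\<And>w x z. (w, x, z) \<in> U \<Longrightarrow> exp (L (w, x, z)) = A (w, x, z)"
    and A: "\<And>t. A (wz_line dw dz p t) = c + t * \<delta>"
  shows "((\<lambda>t. L (wz_line dw dz p t)) has_field_derivative \<delta> / c) (at 0)"
proof -
  have exp_L': "exp (L q) = A q" if "q \<in> U" for q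
    using exp_L[of "fst q" "fst (snd q)" "snd (snd q)"] that by simp
  have "((\<lambda>t. A (wz_line dw dz p t)) has_field_derivative \<delta>) (at 0)"
    unfolding A by (auto intro!: derivative_eq_intros)
  moreover have "continuous_on (wz_line dw dz p -` U) (\<lambda>t. L (wz_line dw dz p t))"
    by (rule continuous_on_compose2[OF L continuous_on_subset[OF continuous_on_wz_line]]) auto
  ultimately have "((\<lambda>t. L (wz_line dw dz p t)) has_field_derivative \<delta> / A (wz_line dw dz p 0)) (at 0)"
    using U(2) exp_L' by (intro has_field_derivative_continuous_log[OF open_vimage[OF U(1) continuous_on_wz_line]])
      simp_all
  then show ?thesis
    using A[of 0] by simp
qed

lemma exp_DERIV_along_wz_line:
  assumes U: "open U" "p \<in> U" and f: "\<And>q. q \<in> U \<Longrightarrow> f q = exp (E q)"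
    and E: "((\<lambda>t. E (wz_line dw dz p t)) has_field_derivative D) (at 0)"
  shows "((\<lambda>t. f (wz_line dw dz p t)) has_field_derivative f p * D) (at 0)"
proof (rule has_field_derivative_transform_within_open)
  show "open (wz_line dw dz p -` U)"
    using U(1) continuous_on_wz_line by (rule open_vimage)
  show "((\<lambda>t. exp (E (wz_line dw dz p t))) has_field_derivative f p * D) (at 0)"
    using DERIV_chain2[OF DERIV_exp E] f[OF U(2)] by simp
qed (use U(2) f in auto)

text \<open>No distinctness hypothesis is needed: every difference occurring as a denominator is an
  exponential on \<open>U\<close>.\<close>

lemma is_branch_DERIV_along_wz_line:
  assumes f: "is_branch n N l a U f" and U: "open U" "(w, x, z) \<in> U"
  shows "((\<lambda>t. f (wz_line dw dz (w, x, z) t)) has_field_derivative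
           f (w, x, z) * ((\<Sum>i\<in>{1..n}. \<Sum>k\<in>{1..N}. - 2 * of_real (l i) * a * (dz k / (z k - x i)))
             + (\<Sum>s\<in>{1..N}. \<Sum>r\<in>{1..<s}. 2 * a * ((dz s - dz r) / (z s - z r)))
             + (\<Sum>k\<in>{1..N}. (2 * a - 2) * ((dz k - dw) / (z k - w)))
             + (\<Sum>i\<in>{1..n}. 2 * of_real (l i) * (1 - a) * (- dw / (x i - w))))) (at 0)"
proof -
  let ?line = "wz_line dw dz (w, x, z)"
  from f obtain Lxx Lzx Lzz Lzw Lxw where
      cont: "\<forall>i\<in>{1..n}. \<forall>j\<in>{1..n}. i < j \<longrightarrow> continuous_on U (Lxx i j)"
        "\<forall>i\<in>{1..n}. \<forall>k\<in>{1..N}. continuous_on U (Lzx i k)"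
        "\<forall>r\<in>{1..N}. \<forall>s\<in>{1..N}. r < s \<longrightarrow> continuous_on U (Lzz r s)"
        "\<forall>k\<in>{1..N}. continuous_on U (Lzw k 0)"
        "\<forall>i\<in>{1..n}. continuous_on U (Lxw i 0)"
    and logs: "\<forall>(w, x, z)\<in>U.
          (\<forall>i\<in>{1..n}. \<forall>j\<in>{1..n}. i < j \<longrightarrow> exp (Lxx i j (w, x, z)) = x j - x i) \<and>
          (\<forall>i\<in>{1..n}. \<forall>k\<in>{1..N}. exp (Lzx i k (w, x, z)) = z k - x i) \<and>
          (\<forall>r\<in>{1..N}. \<forall>s\<in>{1..N}. r < s \<longrightarrow> exp (Lzz r s (w, x, z)) = z s - z r) \<and>
          (\<forall>k\<in>{1..N}. exp (Lzw k 0 (w, x, z)) = z k - w) \<and>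
          (\<forall>i\<in>{1..n}. exp (Lxw i 0 (w, x, z)) = x i - w) \<and>
          f (w, x, z) = exp (
              (\<Sum>j\<in>{1..n}. \<Sum>i\<in>{1..<j}. 2 * of_real (l i) * of_real (l j) * a * Lxx i j (w, x, z))
            + (\<Sum>i\<in>{1..n}. \<Sum>k\<in>{1..N}. - 2 * of_real (l i) * a * Lzx i k (w, x, z))
            + (\<Sum>s\<in>{1..N}. \<Sum>r\<in>{1..<s}. 2 * a * Lzz r s (w, x, z))
            + (\<Sum>k\<in>{1..N}. (2 * a - 2) * Lzw k 0 (w, x, z))
            + (\<Sum>i\<in>{1..n}. 2 * of_real (l i) * (1 - a) * Lxw i 0 (w, x, z)))"
    unfolding is_branch_def by (elim exE conjE) (rule that; assumption)
  define E where "E p =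
      (\<Sum>j\<in>{1..n}. \<Sum>i\<in>{1..<j}. 2 * of_real (l i) * of_real (l j) * a * Lxx i j p)
    + (\<Sum>i\<in>{1..n}. \<Sum>k\<in>{1..N}. - 2 * of_real (l i) * a * Lzx i k p)
    + (\<Sum>s\<in>{1..N}. \<Sum>r\<in>{1..<s}. 2 * a * Lzz r s p)
    + (\<Sum>k\<in>{1..N}. (2 * a - 2) * Lzw k 0 p)
    + (\<Sum>i\<in>{1..n}. 2 * of_real (l i) * (1 - a) * Lxw i 0 p)" for p
  have "((\<lambda>t. E (?line t)) has_field_derivative
          (\<Sum>j\<in>{1..n}. \<Sum>i\<in>{1..<j}. 2 * of_real (l i) * of_real (l j) * a * 0)
        + (\<Sum>i\<in>{1..n}. \<Sum>k\<in>{1..N}. - 2 * of_real (l i) * a * (dz k / (z k - x i)))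
        + (\<Sum>s\<in>{1..N}. \<Sum>r\<in>{1..<s}. 2 * a * ((dz s - dz r) / (z s - z r)))
        + (\<Sum>k\<in>{1..N}. (2 * a - 2) * ((dz k - dw) / (z k - w)))
        + (\<Sum>i\<in>{1..n}. 2 * of_real (l i) * (1 - a) * (- dw / (x i - w)))) (at 0)"
    unfolding E_def
  proof (intro DERIV_add DERIV_sum DERIV_cmult)
    fix j i assume "j \<in> {1..n}" "i \<in> {1..<j}"
    then have "((\<lambda>t. Lxx i j (?line t)) has_field_derivative 0 / (x j - x i)) (at 0)"
      using cont(1) logs
      by (intro continuous_log_DERIV_along_wz_line[OF U, where A = "\<lambda>(w, x, z). x j - x i" and c = "x j - x i"])
        (auto simp: wz_line_def algebra_simps)
    then show "((\<lambda>t. Lxx i j (?line t)) has_field_derivative 0) (at 0)"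
      by simp
  next
    fix i k assume "i \<in> {1..n}" "k \<in> {1..N}"
    then show "((\<lambda>t. Lzx i k (?line t)) has_field_derivative dz k / (z k - x i)) (at 0)"
      using cont(2) logs
      by (intro continuous_log_DERIV_along_wz_line[OF U, where A = "\<lambda>(w, x, z). z k - x i" and c = "z k - x i"])
        (auto simp: wz_line_def algebra_simps)
  next
    fix s r assume "s \<in> {1..N}" "r \<in> {1..<s}"
    then show "((\<lambda>t. Lzz r s (?line t)) has_field_derivative (dz s - dz r) / (z s - z r)) (at 0)"
      using cont(3) logs
      by (intro continuous_log_DERIV_along_wz_line[OF U, where A = "\<lambda>(w, x, z). z s - z r" and c = "z s - z r"])
        (auto simp: wz_line_def algebra_simps)
  next
    fix k assume "k \<in> {1..N}"
    then show "((\<lambda>t. Lzw k 0 (?line t)) has_field_derivative (dz k - dw) / (z k - w)) (at 0)"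
      using cont(4) logs
      by (intro continuous_log_DERIV_along_wz_line[OF U, where A = "\<lambda>(w, x, z). z k - w" and c = "z k - w"])
        (auto simp: wz_line_def algebra_simps)
  next
    fix i assume "i \<in> {1..n}"
    then show "((\<lambda>t. Lxw i 0 (?line t)) has_field_derivative - dw / (x i - w)) (at 0)"
      using cont(5) logs
      by (intro continuous_log_DERIV_along_wz_line[OF U, where A = "\<lambda>(w, x, z). x i - w" and c = "x i - w"])
        (auto simp: wz_line_def algebra_simps)
  qed
  moreover have "f p = exp (E p)" if "p \<in> U" for p
    using bspec[OF logs that] by (cases p) (simp add: E_def)
  ultimately show ?thesis
    using U by (intro exp_DERIV_along_wz_line) simp_all
qed

lemma is_branch_DERIV_w:
  assumes "is_branch n N l a U f" "open U" "(w, x, z) \<in> U"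
  shows "((\<lambda>t. f (t, x, z)) has_field_derivative
           f (w, x, z) * ((1 - a) * ((\<Sum>i\<in>{1..n}. 2 * of_real (l i) / (w - x i)) - (\<Sum>k\<in>{1..N}. 2 / (w - z k)))))
         (at w)"
proof -
  have "((\<lambda>t. f (t + w, x, z)) has_field_derivative
      f (w, x, z) * ((\<Sum>k\<in>{1..N}. (2 * a - 2) * ((0 - 1) / (z k - w)))
        + (\<Sum>i\<in>{1..n}. 2 * of_real (l i) * (1 - a) * (- 1 / (x i - w))))) (at 0)"
    using is_branch_DERIV_along_wz_line[OF assms, of 1 "\<lambda>_. 0"] by (simp add: wz_line_def add.commute)
  moreover have "(\<Sum>k\<in>{1..N}. (2 * a - 2) * ((0 - 1) / (z k - w)))
        + (\<Sum>i\<in>{1..n}. 2 * of_real (l i) * (1 - a) * (- 1 / (x i - w)))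
      = (1 - a) * ((\<Sum>i\<in>{1..n}. 2 * of_real (l i) / (w - x i)) - (\<Sum>k\<in>{1..N}. 2 / (w - z k)))"
  proof -
    have "(2 * a - 2) * ((0 - 1) / (z k - w)) = - ((1 - a) * (2 / (w - z k)))" for k
      by (simp add: divide_simps) (simp add: algebra_simps)
    moreover have "2 * of_real (l i) * (1 - a) * (- 1 / (x i - w)) = (1 - a) * (2 * of_real (l i) / (w - x i))"
      for i
      by (simp add: divide_simps) (simp add: algebra_simps)
    ultimately show ?thesis
      by (simp only: sum_negf sum_distrib_left right_diff_distrib) simp
  qed
  ultimately show ?thesis
    using DERIV_shift[of "\<lambda>t. f (t, x, z)" _ 0 w] by simp
qed

lemma sum_lower_pairs_delta:
  fixes G :: "nat \<Rightarrow> nat \<Rightarrow> 'a::ab_group_add"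
  assumes "r \<in> {1..N}"
  shows "(\<Sum>s\<in>{1..N}. \<Sum>q\<in>{1..<s}. (if s = r then G q s else 0) - (if q = r then G q s else 0))
           = (\<Sum>q\<in>{1..<r}. G q r) - (\<Sum>s\<in>{r<..N}. G r s)"
proof -
  have "(\<Sum>q\<in>{1..<s}. if s = r then G q s else 0) = (if s = r then \<Sum>q\<in>{1..<s}. G q s else 0)" for s
    by simp
  moreover have "(\<Sum>q\<in>{1..<s}. if q = r then G q s else 0) = (if r < s then G r s else 0)" for s
    using assms by simp
  moreover have "(\<Sum>s\<in>{1..N}. if r < s then G r s else 0) = (\<Sum>s\<in>{r<..N}. G r s)"
    using assms by (simp add: sum.inter_filter[symmetric]) (intro sum.cong; auto)
  ultimately show ?thesis
    using assms by (simp add: sum_subtractf)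
qed

lemma is_branch_DERIV_z:
  assumes "is_branch n N l a U f" "open U" "(w, x, z) \<in> U" and r: "r \<in> {1..N}"
  shows "((\<lambda>t. f (w, x, z(r := t))) has_field_derivative
           f (w, x, z) * (- a * (\<Sum>i\<in>{1..n}. 2 * of_real (l i) / (z r - x i))
             + 2 * a * (\<Sum>s\<in>{1..N} - {r}. 1 / (z r - z s)) + (2 * a - 2) / (z r - w))) (at (z r))"
proof -
  define \<delta> where "\<delta> k = (if k = r then 1 else 0 :: complex)" for k
  have \<delta>_div: "c * (\<delta> k / e) = (if k = r then c / e else 0)" "\<delta> k / e = (if k = r then 1 / e else 0)"
    for c k e
    by (simp_all add: \<delta>_def)
  have "(\<lambda>k. z k + t * \<delta> k) = z(r := t + z r)" for t
    by (auto simp: \<delta>_def)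
  then have "((\<lambda>t. f (w, x, z(r := t + z r))) has_field_derivative
      f (w, x, z) * ((\<Sum>i\<in>{1..n}. \<Sum>k\<in>{1..N}. - 2 * of_real (l i) * a * (\<delta> k / (z k - x i)))
        + (\<Sum>s\<in>{1..N}. \<Sum>q\<in>{1..<s}. 2 * a * ((\<delta> s - \<delta> q) / (z s - z q)))
        + (\<Sum>k\<in>{1..N}. (2 * a - 2) * (\<delta> k / (z k - w))))) (at 0)"
    using is_branch_DERIV_along_wz_line[OF assms(1-3), of 0 \<delta>] by (simp add: wz_line_def)
  moreover have "(\<Sum>i\<in>{1..n}. \<Sum>k\<in>{1..N}. - 2 * of_real (l i) * a * (\<delta> k / (z k - x i)))
      = - a * (\<Sum>i\<in>{1..n}. 2 * of_real (l i) / (z r - x i))"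
    using r by (simp only: \<delta>_div(1)) (simp add: sum_distrib_left mult.commute)
  moreover have "(\<Sum>k\<in>{1..N}. (2 * a - 2) * (\<delta> k / (z k - w))) = (2 * a - 2) / (z r - w)"
    using r by (simp only: \<delta>_div(1)) simp
  moreover have "(\<Sum>s\<in>{1..N}. \<Sum>q\<in>{1..<s}. 2 * a * ((\<delta> s - \<delta> q) / (z s - z q)))
      = 2 * a * (\<Sum>s\<in>{1..N} - {r}. 1 / (z r - z s))"
  proof -
    have "(\<Sum>s\<in>{1..N}. \<Sum>q\<in>{1..<s}. (\<delta> s - \<delta> q) / (z s - z q))
        = (\<Sum>q\<in>{1..<r}. 1 / (z r - z q)) - (\<Sum>s\<in>{r<..N}. 1 / (z s - z r))"
      using sum_lower_pairs_delta[OF r, of "\<lambda>q s. 1 / (z s - z q)"]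
      by (simp only: diff_divide_distrib \<delta>_div(2))
    also have "\<dots> = (\<Sum>s\<in>{1..<r} \<union> {r<..N}. 1 / (z r - z s))"
      by (subst sum.union_disjoint) (auto simp: sum_negf[symmetric] minus_divide_right)
    also have "{1..<r} \<union> {r<..N} = {1..N} - {r}"
      using r by auto
    finally have "(\<Sum>s\<in>{1..N}. \<Sum>q\<in>{1..<s}. (\<delta> s - \<delta> q) / (z s - z q))
        = (\<Sum>s\<in>{1..N} - {r}. 1 / (z r - z s))" .
    then show ?thesis
      by (simp only: sum_distrib_left[symmetric])
  qed
  ultimately show ?thesis
    using DERIV_shift[of "\<lambda>t. f (w, x, z(r := t))" _ 0 "z r"] by simp
qed

lemma g_fun_DERIV_z:
  assumes cfg: "(w, x, z) \<in> config n N" and r: "r \<in> {1..N}"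
  shows "((\<lambda>t. g_fun n N l r (w, x, z(r := t))) has_field_derivative
           g_fun n N l r (w, x, z) * ((\<Sum>i\<in>{1..n}. of_nat (nat \<lfloor>2 * l i\<rfloor>) / (z r - x i))
             - (\<Sum>s\<in>{1..N} - {r}. 2 / (z r - z s)))) (at (z r))"
proof -
  define m where "m i = nat \<lfloor>2 * l i\<rfloor>" for i
  define P where "P t = (\<Prod>i\<in>{1..n}. (t - x i) ^ m i)" for t
  define Q where "Q t = (\<Prod>s\<in>{1..N} - {r}. (t - z s) ^ 2)" for t
  have xw: "\<And>i. i \<in> {1..n} \<Longrightarrow> x i \<noteq> w" and zw: "\<And>s. s \<in> {1..N} \<Longrightarrow> z s \<noteq> w"
    and xz: "\<And>i. i \<in> {1..n} \<Longrightarrow> x i \<noteq> z r" and zz: "\<And>s. s \<in> {1..N} - {r} \<Longrightarrow> z s \<noteq> z r"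
    using cfg r by (auto simp: config_def dest: inj_onD)
  have g: "g_fun n N l r (w, x, z(r := t)) = - (P t / P w * (Q w / Q t))" for t
    by (simp add: g_fun_def P_def Q_def m_def power_divide prod_dividef)
  have "P w \<noteq> 0"
    using xw by (simp add: P_def eq_commute[of w])
  moreover have "Q (z r) \<noteq> 0"
    using zz by (simp add: Q_def eq_commute[of "z r"])
  moreover have "(P has_field_derivative P (z r) * (\<Sum>i\<in>{1..n}. of_nat (m i) / (z r - x i))) (at (z r))"
    unfolding P_def using xz by (intro DERIV_prod_linear_powers) metis
  moreover have "(Q has_field_derivative Q (z r) * (\<Sum>s\<in>{1..N} - {r}. of_nat 2 / (z r - z s))) (at (z r))"
    unfolding Q_def using zz by (intro DERIV_prod_linear_powers) metis
  ultimately have "((\<lambda>t. - (P t / P w * (Q w / Q t))) has_field_derivative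
      - (P (z r) / P w * (Q w / Q (z r)))
        * ((\<Sum>i\<in>{1..n}. of_nat (m i) / (z r - x i)) - (\<Sum>s\<in>{1..N} - {r}. 2 / (z r - z s)))) (at (z r))"
    by (auto intro!: derivative_eq_intros elim!: DERIV_cong simp: field_simps power2_eq_square)
  moreover have "g_fun n N l r (w, x, z) = - (P (z r) / P w * (Q w / Q (z r)))"
    using g[of "z r"] by simp
  ultimately show ?thesis
    unfolding g m_def by simp
qed

lemma of_nat_nat_floor_double:
  assumes "l > 0" "2 * l \<in> \<int>"
  shows "of_nat (nat \<lfloor>2 * l\<rfloor>) = (2 * of_real l :: 'a::real_algebra_1)"
proof -
  obtain k where "2 * l = of_int k" "k \<ge> 0"
    using assms by (auto elim!: Ints_cases)
  then show ?thesis
    by (metis floor_of_int of_int_of_nat_eq of_real_of_int_eq nat_0_le of_real_mult of_real_numeral)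
qed

lemma sum_nat_floor_double:
  assumes "\<forall>i\<in>I. l i > 0 \<and> 2 * l i \<in> \<int>" "(\<Sum>i\<in>I. l i) = real N"
  shows "(\<Sum>i\<in>I. nat \<lfloor>2 * l i\<rfloor>) = 2 * N"
proof -
  have "real (\<Sum>i\<in>I. nat \<lfloor>2 * l i\<rfloor>) = (\<Sum>i\<in>I. 2 * l i)"
    using assms(1) by (simp add: of_nat_nat_floor_double)
  also have "\<dots> = real (2 * N)"
    using assms(2) by (simp add: sum_distrib_left[symmetric])
  finally show ?thesis
    by (simp only: of_nat_eq_iff)
qed

lemma g_fun_mult_branch_DERIV_z:
  assumes l: "\<forall>i\<in>{1..n}. l i > 0 \<and> 2 * l i \<in> \<int>"
    and f: "is_branch n N l a U f" "open U" "U \<subseteq> config n N" "(w, x, z) \<in> U" and r: "r \<in> {1..N}"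
  shows "((\<lambda>t. g_fun n N l r (w, x, z(r := t)) * f (w, x, z(r := t))) has_field_derivative
           f (w, x, z) * ((1 - a) * (g_fun n N l r (w, x, z)
             * ((\<Sum>i\<in>{1..n}. of_nat (nat \<lfloor>2 * l i\<rfloor>) / (z r - x i))
                - (\<Sum>s\<in>{1..N} - {r}. 2 / (z r - z s)) - 2 / (z r - w))))) (at (z r))"
proof -
  have "(\<Sum>i\<in>{1..n}. of_nat (nat \<lfloor>2 * l i\<rfloor>) / (z r - x i)) = (\<Sum>i\<in>{1..n}. 2 * of_real (l i) / (z r - x i))"
    using l by (simp add: of_nat_nat_floor_double)
  moreover have "(\<Sum>s\<in>{1..N} - {r}. 2 / (z r - z s)) = 2 * (\<Sum>s\<in>{1..N} - {r}. 1 / (z r - z s))"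
    by (simp add: sum_distrib_left)
  ultimately show ?thesis
    using DERIV_mult[OF g_fun_DERIV_z[of w x z n N r l] is_branch_DERIV_z[OF f(1,2,4) r]] f(3,4) r
    by (auto elim!: DERIV_cong simp: algebra_simps diff_divide_distrib)
qed

theorem lemma1:
  fixes n N :: nat and l :: "nat \<Rightarrow> real" and a :: complex
    and U :: "cpoint set" and f :: "cpoint \<Rightarrow> complex"
    and w :: complex and x z :: "nat \<Rightarrow> complex"
  assumes "n \<ge> 1"
    and "\<forall>i\<in>{1..n}. l i > 0 \<and> 2 * l i \<in> \<int>"
    and "(\<Sum>i\<in>{1..n}. l i) = real N"
    and "open U" and "U \<subseteq> config n N"
    and "is_branch n N l a U f"
    and "(w, x, z) \<in> U"
  shows "deriv (\<lambda>t. f (t, x, z)) w =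
         (\<Sum>r\<in>{1..N}. deriv (\<lambda>t. g_fun n N l r (w, x, z(r := t)) * f (w, x, z(r := t))) (z r))"
proof -
  define m where "m i = nat \<lfloor>2 * l i\<rfloor>" for i
  have m_sum: "(\<Sum>i\<in>{1..n}. m i) = 2 * card {1..N}"
    using sum_nat_floor_double[OF assms(2,3)] by (simp add: m_def)
  have "(w, x, z) \<in> config n N"
    using assms(5,7) by auto
  then have z_inj: "inj_on z {1..N}"
    and distinct: "\<And>i k. i \<in> {1..n} \<Longrightarrow> k \<in> {1..N} \<Longrightarrow> x i \<noteq> z k"
      "\<And>i. i \<in> {1..n} \<Longrightarrow> x i \<noteq> w" "\<And>k. k \<in> {1..N} \<Longrightarrow> z k \<noteq> w"
    by (auto simp: config_def)
  have "deriv (\<lambda>t. f (t, x, z)) w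
      = f (w, x, z) * ((1 - a) * ((\<Sum>i\<in>{1..n}. of_nat (m i) / (w - x i)) - (\<Sum>k\<in>{1..N}. 2 / (w - z k))))"
    using is_branch_DERIV_w[OF assms(6,4,7)] assms(2)
    by (intro DERIV_imp_deriv) (simp add: m_def of_nat_nat_floor_double)
  also have "\<dots> = f (w, x, z) * ((1 - a) * (\<Sum>r\<in>{1..N}. g_fun n N l r (w, x, z)
      * ((\<Sum>i\<in>{1..n}. of_nat (m i) / (z r - x i)) - (\<Sum>s\<in>{1..N} - {r}. 2 / (z r - z s)) - 2 / (z r - w))))"
    using log_deriv_partial_fraction_identity[OF _ _ z_inj m_sum distinct] by (simp add: g_fun_def m_def)
  also have "\<dots> = (\<Sum>r\<in>{1..N}. deriv (\<lambda>t. g_fun n N l r (w, x, z(r := t)) * f (w, x, z(r := t))) (z r))"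
    unfolding sum_distrib_left m_def
    using g_fun_mult_branch_DERIV_z[OF assms(2,6,4,5,7), THEN DERIV_imp_deriv]
    by (intro sum.cong refl) simp
  finally show ?thesis .
qed

end
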